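(* Let $p_1,\dots,p_r,q_1,\dots,q_s$ be positive integers with $\sum_ip_i=\sum_jq_j$ and $\gcd(p_1,\dots,q_s)=1$, let $q$ be a prime power, $\lambda\in\mathbb{F}_q^\times$, and let $C$ be a non-empty cell with $|S(C)|\le r+s-1$. Then $$N_{C,\lambda}=\frac{(q-1)^{r+s-l(C)-2}}{q}+\frac{(-1)^{|S(C)|}(q-1)^{|S(C)|-l(C)-1}}{q}\sum_{m=0}^{q-2}\delta(a_Sm)\prod_{i=1}^rg(p_im)\prod_{j=1}^sg(-q_jm)\,\omega(\epsilon\lambda)^m,$$ where $\epsilon=(-1)^{q_1+\cdots+q_s}$ and $\delta(x)=1$ if $x\equiv0\pmod{q-1}$ and $0$ otherwise. (In particular the count does not depend on the choice of the coordinate set equal to $1$.)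
   Context: Fix a nontrivial additive character $\psi_q$ of $\mathbb{F}_q$, a generator $\omega$ of the character group of $\mathbb{F}_q^\times$, and $g(m)=\sum_{x\in\mathbb{F}_q^\times}\omega(x)^m\psi_q(x)$. A cell is a finite (possibly empty) sequence of distinct pairs $(i_1,j_1),\dots,(i_l,j_l)$ with $1\le i_k\le r$, $1\le j_k\le s$, $i_1\le\cdots\le i_l$, $j_1\le\cdots\le j_l$; $l(C)=l$, $S_x(C)=\{i_1,\dots,i_l\}$, $S_y(C)=\{j_1,\dots,j_l\}$, $|S(C)|=|S_x(C)|+|S_y(C)|$, and $a_S=\gcd(\{p_i:i\in S_x(C)\}\cup\{q_j:j\in S_y(C)\})$. $N'_{C,\lambda}$ is the number of tuples $(x_i)_{i\notin S_x(C)},(y_j)_{j\notin S_y(C)},z$ with all entries in $\mathbb{F}_q^\times$, where one chosen coordinate among these $x_i,y_j$ is fixed to be $1$, satisfying $\sum_{i\notin S_x}x_i=\sum_{j\notin S_y}y_j$ and $\lambda z^{a_S}\prod_{i\notin S_x}x_i^{p_i}=\prod_{j\notin S_y}y_j^{q_j}$; and $N_{C,\lambda}=(q-1)^{|S(C)|-l(C)-1}N'_{C,\lambda}$. *)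

theory Defs
  imports Complex_Main "HOL-Library.FuncSet" "HOL-Library.Cardinality"
begin

definition nontriv_add_char :: "('a::{field,finite} \<Rightarrow> complex) \<Rightarrow> bool" where
  "nontriv_add_char \<psi> \<longleftrightarrow>
     (\<forall>x y. \<psi> (x + y) = \<psi> x * \<psi> y) \<and> (\<forall>x. \<psi> x \<noteq> 0) \<and> (\<exists>x. \<psi> x \<noteq> 1)"

text \<open>Multiplicative characters of the unit group (only values on nonzero elements matter).\<close>
definition mult_char :: "('a::{field,finite} \<Rightarrow> complex) \<Rightarrow> bool" where
  "mult_char \<chi> \<longleftrightarrow>
     (\<forall>x y. x \<noteq> 0 \<longrightarrow> y \<noteq> 0 \<longrightarrow> \<chi> (x * y) = \<chi> x * \<chi> y) \<and> (\<forall>x. x \<noteq> 0 \<longrightarrow> \<chi> x \<noteq> 0)"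

definition mult_char_generator :: "('a::{field,finite} \<Rightarrow> complex) \<Rightarrow> bool" where
  "mult_char_generator \<omega> \<longleftrightarrow> mult_char \<omega> \<and>
     (\<forall>\<chi>::'a \<Rightarrow> complex. mult_char \<chi> \<longrightarrow> (\<exists>k::nat. \<forall>x. x \<noteq> 0 \<longrightarrow> \<chi> x = \<omega> x ^ k))"

definition gauss :: "('a::{field,finite} \<Rightarrow> complex) \<Rightarrow> ('a \<Rightarrow> complex) \<Rightarrow> int \<Rightarrow> complex" where
  "gauss \<omega> \<psi> m = (\<Sum>x\<in>{x::'a. x \<noteq> 0}. (\<omega> x) powi m * \<psi> x)"

definition is_cell :: "nat \<Rightarrow> nat \<Rightarrow> (nat \<times> nat) list \<Rightarrow> bool" where
  "is_cell r s C \<longleftrightarrow> distinct C \<and>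
     (\<forall>(i,j)\<in>set C. 1 \<le> i \<and> i \<le> r \<and> 1 \<le> j \<and> j \<le> s) \<and>
     sorted (map fst C) \<and> sorted (map snd C)"

definition Sx :: "(nat \<times> nat) list \<Rightarrow> nat set" where
  "Sx C = fst ` set C"

definition Sy :: "(nat \<times> nat) list \<Rightarrow> nat set" where
  "Sy C = snd ` set C"

definition card_S :: "(nat \<times> nat) list \<Rightarrow> nat" where
  "card_S C = card (Sx C) + card (Sy C)"

definition a_S :: "(nat \<Rightarrow> nat) \<Rightarrow> (nat \<Rightarrow> nat) \<Rightarrow> (nat \<times> nat) list \<Rightarrow> nat" where
  "a_S p qq C = Gcd (p ` Sx C \<union> qq ` Sy C)"

text \<open>Admissible choice of the coordinate fixed to 1: Inl i means x_i, Inr j means y_j.\<close>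
definition valid_choice :: "nat \<Rightarrow> nat \<Rightarrow> (nat \<times> nat) list \<Rightarrow> nat + nat \<Rightarrow> bool" where
  "valid_choice r s C c \<longleftrightarrow>
     (case c of Inl i \<Rightarrow> i \<in> {1..r} - Sx C | Inr j \<Rightarrow> j \<in> {1..s} - Sy C)"

definition N'_cell :: "nat \<Rightarrow> nat \<Rightarrow> (nat \<Rightarrow> nat) \<Rightarrow> (nat \<Rightarrow> nat) \<Rightarrow> (nat \<times> nat) list
    \<Rightarrow> 'a::{field,finite} \<Rightarrow> nat + nat \<Rightarrow> nat" where
  "N'_cell r s p qq C lam c = card
     {(xv, yv, z). xv \<in> (({1..r} - Sx C) \<rightarrow>\<^sub>E {x::'a. x \<noteq> 0}) \<and>
                   yv \<in> (({1..s} - Sy C) \<rightarrow>\<^sub>E {y::'a. y \<noteq> 0}) \<and> z \<noteq> 0 \<and>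
                   (case c of Inl i \<Rightarrow> xv i = 1 | Inr j \<Rightarrow> yv j = 1) \<and>
                   (\<Sum>i\<in>{1..r} - Sx C. xv i) = (\<Sum>j\<in>{1..s} - Sy C. yv j) \<and>
                   lam * z ^ a_S p qq C * (\<Prod>i\<in>{1..r} - Sx C. xv i ^ p i)
                     = (\<Prod>j\<in>{1..s} - Sy C. yv j ^ qq j)}"

text \<open>N_{C,lambda} = (q-1)^(|S(C)| - l(C) - 1) N'_{C,lambda}; the exponent is nonnegative for
  nonempty cells (taken here as an integer power in the complex numbers).\<close>
definition N_cell :: "nat \<Rightarrow> nat \<Rightarrow> (nat \<Rightarrow> nat) \<Rightarrow> (nat \<Rightarrow> nat) \<Rightarrow> (nat \<times> nat) list
    \<Rightarrow> 'a::{field,finite} \<Rightarrow> nat + nat \<Rightarrow> complex" where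
  "N_cell r s p qq C lam c =
     (of_nat (CARD('a)) - 1) powi (int (card_S C) - int (length C) - 1) * of_nat (N'_cell r s p qq C lam c)"

end

theory Submission
  imports Defs "HOL-Algebra.Algebraic_Closure_Type"
begin

(* Both sides are character sums. The indicator of the two equations \<Sum> x_i = \<Sum> y_j and
   \<lambda> z^a \<Prod> x_i^p_i = \<Prod> y_j^q_j is expanded by orthogonality of \<psi> and of the powers \<omega>^m
   (m < q - 1); summing over all unknowns factors each term into twisted Gauss sums
   \<Sum>_u \<psi>(t u) \<omega>(u)^k. For t = 0 these vanish unless q - 1 divides every exponent, which by
   coprimality leaves only m = 0: the main term. For t \<noteq> 0 each factor equals \<omega>(t)^-k g(k), and
   the powers of \<omega>(t) cancel because a_S divides the difference of the exponent sums over the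
   complements of S_x(C) and S_y(C). Fixing one coordinate to 1 divides the count by q - 1, as
   the solutions are permuted freely by (x, y, z) \<mapsto> (s x, s y, s^-e z) with a_S e equal to that
   difference. Finally, whenever q - 1 divides a_S m, every exponent indexed by S(C) is a
   multiple of q - 1, so its Gauss sum is g(0) = -1, which produces the sign (-1)^|S(C)|. *)

lemma power_mod_eq_power:
  assumes "(z::'a::monoid_mult) ^ n = 1"
  shows "z ^ (i mod n) = z ^ i"
proof -
  have "z ^ i = (z ^ n) ^ (i div n) * z ^ (i mod n)"
    by (metis mult_div_mod_eq power_add power_mult)
  then show ?thesis using assms by simp
qed

lemma power_int_eq_power_mod:
  assumes "(z::'a::division_ring) ^ n = 1" and "n > 0"
  shows "z powi k = z ^ nat (k mod int n)"
proof -
  have z: "z \<noteq> 0" using assms by (metis power_0_left zero_neq_one not_gr0)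
  have "z powi k = (z powi int n) powi (k div int n) * z powi (k mod int n)"
    by (metis z mult_div_mod_eq power_int_add power_int_mult)
  also have "\<dots> = z ^ nat (k mod int n)"
    using assms by (simp add: power_int_def)
  finally show ?thesis .
qed

lemma prod_power_int:
  "(x::'a::field) \<noteq> 0 \<Longrightarrow> (\<Prod>i\<in>A. x powi f i) = x powi (\<Sum>i\<in>A. f i)"
  by (induction A rule: infinite_finite_induct) (simp_all add: power_int_add)

lemma power_int_of_nat_mult: "(x::'a::division_ring) powi (int k * int m) = (x ^ k) ^ m"
  by (simp add: power_mult flip: of_nat_mult)

section \<open>The multiplicative group of a finite field\<close>

text \<open>HOL-Algebra has two constants named \<open>mult_of\<close>; the group-theoretic facts used here are
  stated for the one from \<open>Multiplicative_Group\<close>.\<close>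

lemma pow_ring_of_type_algebra:
  "(x :: 'a::ring_1) [^]\<^bsub>ring_of_type_algebra\<^esub> (n::nat) = x ^ n"
  by (induction n) (simp_all add: ring_of_type_algebra_def power_commutes)

lemma carrier_mult_of_type_algebra:
  "carrier (Multiplicative_Group.mult_of (ring_of_type_algebra :: 'a::ring_1 ring)) = {x. x \<noteq> 0}"
  by (auto simp: ring_of_type_algebra_def)

lemma finite_field_cyclic:
  "\<exists>g::'a::{field,finite}. g \<noteq> 0 \<and> (\<forall>x. x \<noteq> 0 \<longrightarrow> (\<exists>i::nat. x = g ^ i))"
proof -
  let ?R = "ring_of_type_algebra :: 'a ring"
  have "finite (carrier ?R)" by (simp add: ring_of_type_algebra_def)
  from field.finite_field_mult_group_has_gen[OF field_from_type_algebra this] obtain g where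
    g: "g \<noteq> 0" and gen: "{x. x \<noteq> 0} = {g [^]\<^bsub>?R\<^esub> i |i::nat. i \<in> UNIV}"
    unfolding carrier_mult_of_type_algebra by blast
  have "\<exists>i::nat. x = g ^ i" if "x \<noteq> 0" for x
  proof -
    from that have "x \<in> {g [^]\<^bsub>?R\<^esub> i |i::nat. i \<in> UNIV}" by (subst gen[symmetric]) simp
    then show ?thesis by (auto simp: pow_ring_of_type_algebra)
  qed
  with g show ?thesis by blast
qed

lemma card_nonzero_field: "card {x::'a::{field,finite}. x \<noteq> 0} = CARD('a) - 1"
proof -
  have "{x::'a. x \<noteq> 0} = UNIV - {0}" by auto
  then show ?thesis by (simp add: card_Diff_singleton)
qed

lemma card_field_ge_2: "CARD('a::{field,finite}) \<ge> 2"
proof -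
  have "card {0::'a, 1} \<le> CARD('a)" by (rule card_mono) auto
  then show ?thesis by simp
qed

lemma field_fermat:
  assumes "(x::'a::{field,finite}) \<noteq> 0"
  shows "x ^ (CARD('a) - 1) = 1"
proof -
  let ?R = "ring_of_type_algebra :: 'a ring"
  let ?G = "Multiplicative_Group.mult_of ?R"
  have "x [^]\<^bsub>?G\<^esub> Coset.order ?G = \<one>\<^bsub>?G\<^esub>"
    by (rule group.pow_order_eq_1[OF field.field_mult_group[OF field_from_type_algebra]])
       (use assms in \<open>simp add: ring_of_type_algebra_def\<close>)
  then show ?thesis
    by (simp add: field.order_mult_of[OF field_from_type_algebra] Coset.order_def
        Multiplicative_Group.nat_pow_mult_of pow_ring_of_type_algebra)
       (simp add: ring_of_type_algebra_def)
qed

definition mult_generator :: "'a::{field,finite}" where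
  "mult_generator = (SOME g. g \<noteq> 0 \<and> (\<forall>x. x \<noteq> 0 \<longrightarrow> (\<exists>i::nat. x = g ^ i)))"

lemma mult_generator_nonzero: "mult_generator \<noteq> (0::'a::{field,finite})"
  and mult_generator_power_surj: "x \<noteq> 0 \<Longrightarrow> \<exists>i::nat. x = (mult_generator::'a) ^ i"
  using someI_ex[OF finite_field_cyclic, folded mult_generator_def] by auto

lemma mult_generator_power_mod:
  "(mult_generator::'a::{field,finite}) ^ (i mod (CARD('a) - 1)) = mult_generator ^ i"
  by (rule power_mod_eq_power[OF field_fermat[OF mult_generator_nonzero]])

lemma bij_betw_mult_generator_power:
  "bij_betw (\<lambda>i. mult_generator ^ i) {..<CARD('a) - 1} {x::'a::{field,finite}. x \<noteq> 0}"
proof -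
  let ?g = "mult_generator :: 'a"
  have image: "(\<lambda>i. ?g ^ i) ` {..<CARD('a) - 1} = {x. x \<noteq> 0}"
  proof (intro equalityI subsetI)
    fix x :: 'a
    assume "x \<in> {x. x \<noteq> 0}"
    then obtain i where "x = ?g ^ i" using mult_generator_power_surj by auto
    then have "x = ?g ^ (i mod (CARD('a) - 1))"
      by (simp only: mult_generator_power_mod)
    moreover have "i mod (CARD('a) - 1) < CARD('a) - 1"
      using card_field_ge_2[where 'a='a] by simp
    ultimately show "x \<in> (\<lambda>i. ?g ^ i) ` {..<CARD('a) - 1}" by blast
  qed (auto simp: mult_generator_nonzero)
  then have "inj_on (\<lambda>i. ?g ^ i) {..<CARD('a) - 1}"
    by (simp add: inj_on_iff_eq_card card_nonzero_field)
  with image show ?thesis by (simp add: bij_betw_def)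
qed

lemma mult_generator_power_eq_iff:
  "(mult_generator::'a::{field,finite}) ^ i = mult_generator ^ j
     \<longleftrightarrow> i mod (CARD('a) - 1) = j mod (CARD('a) - 1)"
proof -
  have "(mult_generator::'a) ^ i = mult_generator ^ j \<longleftrightarrow>
      (mult_generator::'a) ^ (i mod (CARD('a) - 1)) = mult_generator ^ (j mod (CARD('a) - 1))"
    by (simp only: mult_generator_power_mod)
  also have "\<dots> \<longleftrightarrow> i mod (CARD('a) - 1) = j mod (CARD('a) - 1)"
    using bij_betw_mult_generator_power[where 'a='a] card_field_ge_2[where 'a='a]
    by (intro inj_on_eq_iff) (auto simp: bij_betw_def)
  finally show ?thesis .
qed

lemma exists_faithful_mult_char:
  "\<exists>\<chi>::'a::{field,finite} \<Rightarrow> complex. mult_char \<chi> \<and> (\<forall>x. x \<noteq> 0 \<longrightarrow> \<chi> x = 1 \<longrightarrow> x = 1)"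
proof -
  let ?n = "CARD('a) - 1"
  have n: "?n > 0" using card_field_ge_2[where 'a='a] by simp
  define dlog where "dlog = inv_into {..<?n} (\<lambda>i. (mult_generator::'a) ^ i)"
  have dlog: "dlog x < ?n" "mult_generator ^ dlog x = x" if "x \<noteq> 0" for x
    using that bij_betw_inv_into_right[OF bij_betw_mult_generator_power, of x]
      inv_into_into[of x "\<lambda>i. (mult_generator::'a) ^ i" "{..<?n}"]
      bij_betw_mult_generator_power[where 'a='a]
    unfolding dlog_def by (auto simp: bij_betw_def)
  define \<zeta> where "\<zeta> = cis (2 * pi / real ?n)"
  have zeta_power: "\<zeta> ^ k = cis (2 * pi * real k / real ?n)" for k
    by (simp add: \<zeta>_def DeMoivre mult_ac)
  have zeta_root: "\<zeta> ^ ?n = 1"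
    using n by (simp add: zeta_power)
  have "mult_char (\<lambda>x. \<zeta> ^ dlog x)"
    unfolding mult_char_def
  proof (intro conjI allI impI)
    fix x y :: 'a
    assume x: "x \<noteq> 0" and y: "y \<noteq> 0"
    have "mult_generator ^ dlog (x * y) = (mult_generator::'a) ^ (dlog x + dlog y)"
      using x y by (simp add: dlog power_add)
    then have "dlog (x * y) mod ?n = (dlog x + dlog y) mod ?n"
      by (simp add: mult_generator_power_eq_iff)
    then have "\<zeta> ^ dlog (x * y) = \<zeta> ^ (dlog x + dlog y)"
      by (metis power_mod_eq_power[OF zeta_root])
    then show "\<zeta> ^ dlog (x * y) = \<zeta> ^ dlog x * \<zeta> ^ dlog y"
      by (simp add: power_add)
  qed (simp add: \<zeta>_def)
  moreover have "x = 1" if "x \<noteq> 0" and "\<zeta> ^ dlog x = 1" for x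
  proof -
    have inj: "inj_on (\<lambda>k. cis (2 * pi * real k / real ?n)) {..<?n}"
      using bij_betw_roots_unity[OF n] by (simp add: bij_betw_def)
    have "cis (2 * pi * real (dlog x) / real ?n) = cis (2 * pi * real (0::nat) / real ?n)"
      using that(2) by (simp add: zeta_power)
    then have "dlog x = 0"
      by (rule inj_onD[OF inj]) (use dlog(1)[OF that(1)] n in auto)
    then show "x = 1" using dlog(2)[OF that(1)] by simp
  qed
  ultimately show ?thesis by blast
qed

section \<open>Solution sets and scaling\<close>

definition solution_set :: "nat set \<Rightarrow> nat set \<Rightarrow> (nat \<Rightarrow> nat) \<Rightarrow> (nat \<Rightarrow> nat) \<Rightarrow> nat \<Rightarrow> 'a::field
    \<Rightarrow> ((nat \<Rightarrow> 'a) \<times> (nat \<Rightarrow> 'a) \<times> 'a) set" where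
  "solution_set I J p qq a lam =
     {(xv, yv, z). xv \<in> I \<rightarrow>\<^sub>E {x. x \<noteq> 0} \<and> yv \<in> J \<rightarrow>\<^sub>E {y. y \<noteq> 0} \<and> z \<noteq> 0 \<and>
       (\<Sum>i\<in>I. xv i) = (\<Sum>j\<in>J. yv j) \<and>
       lam * z ^ a * (\<Prod>i\<in>I. xv i ^ p i) = (\<Prod>j\<in>J. yv j ^ qq j)}"

definition coord :: "nat + nat \<Rightarrow> (nat \<Rightarrow> 'a) \<times> (nat \<Rightarrow> 'a) \<times> 'a \<Rightarrow> 'a" where
  "coord c d = (case c of Inl i \<Rightarrow> fst d i | Inr j \<Rightarrow> fst (snd d) j)"

lemma N'_cell_eq_card:
  "N'_cell r s p qq C lam c =
     card {d \<in> solution_set ({1..r} - Sx C) ({1..s} - Sy C) p qq (a_S p qq C) lam. coord c d = 1}"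
  unfolding N'_cell_def solution_set_def coord_def
  by (rule arg_cong[where f = card]) (cases c; auto)

definition scale_solution :: "nat set \<Rightarrow> nat set \<Rightarrow> int \<Rightarrow> 'a::field
    \<Rightarrow> (nat \<Rightarrow> 'a) \<times> (nat \<Rightarrow> 'a) \<times> 'a \<Rightarrow> (nat \<Rightarrow> 'a) \<times> (nat \<Rightarrow> 'a) \<times> 'a" where
  "scale_solution I J e s =
     (\<lambda>(xv, yv, z). (restrict (\<lambda>i. s * xv i) I, restrict (\<lambda>j. s * yv j) J, z * s powi (- e)))"

lemma scale_solution_mult:
  "scale_solution I J e s (scale_solution I J e t d) = scale_solution I J e (s * t) d"
  unfolding scale_solution_def
  by (auto simp: split_beta restrict_def fun_eq_iff power_int_mult_distrib mult_ac)

lemma scale_solution_one: "d \<in> solution_set I J p qq a lam \<Longrightarrow> scale_solution I J e 1 d = d"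
  unfolding scale_solution_def solution_set_def by auto

lemma coord_scale_solution:
  "(case c of Inl i \<Rightarrow> i \<in> I | Inr j \<Rightarrow> j \<in> J) \<Longrightarrow>
     coord c (scale_solution I J e s d) = s * coord c d"
  unfolding coord_def scale_solution_def by (cases c) (auto simp: split_beta)

lemma coord_nonzero:
  "(case c of Inl i \<Rightarrow> i \<in> I | Inr j \<Rightarrow> j \<in> J) \<Longrightarrow> d \<in> solution_set I J p qq a lam \<Longrightarrow>
     coord c d \<noteq> 0"
  unfolding coord_def solution_set_def by (cases c) (auto simp: PiE_def Pi_def)

lemma scale_solution_mem:
  assumes "finite I" "finite J" and s: "s \<noteq> 0"
    and e: "int (\<Sum>i\<in>I. p i) - int (\<Sum>j\<in>J. qq j) = int a * e"
    and d: "d \<in> solution_set I J p qq a lam"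
  shows "scale_solution I J e s d \<in> solution_set I J p qq a lam"
proof -
  obtain xv yv z where d_eq: "d = (xv, yv, z)" by (cases d)
  have xv: "xv \<in> I \<rightarrow>\<^sub>E {x. x \<noteq> 0}" and yv: "yv \<in> J \<rightarrow>\<^sub>E {y. y \<noteq> 0}" and z: "z \<noteq> 0"
    and sum_eq: "(\<Sum>i\<in>I. xv i) = (\<Sum>j\<in>J. yv j)"
    and prod_eq: "lam * z ^ a * (\<Prod>i\<in>I. xv i ^ p i) = (\<Prod>j\<in>J. yv j ^ qq j)"
    using d unfolding d_eq solution_set_def by auto
  have "(s powi (- e)) ^ a * s ^ (\<Sum>i\<in>I. p i) = s ^ (\<Sum>j\<in>J. qq j)"
  proof -
    have "(s powi (- e)) ^ a = s powi (- e * int a)"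
      by (metis power_int_mult power_int_of_nat)
    then have "(s powi (- e)) ^ a * s ^ (\<Sum>i\<in>I. p i) = s powi (- e * int a + int (\<Sum>i\<in>I. p i))"
      using s by (metis power_int_add power_int_of_nat)
    also have "- e * int a + int (\<Sum>i\<in>I. p i) = int (\<Sum>j\<in>J. qq j)"
      using e by (simp add: algebra_simps)
    finally show ?thesis by (simp only: power_int_of_nat)
  qed
  then have "lam * (z * s powi (- e)) ^ a * (\<Prod>i\<in>I. (s * xv i) ^ p i)
      = (\<Prod>j\<in>J. (s * yv j) ^ qq j)"
    using prod_eq[symmetric]
    by (simp add: power_mult_distrib prod.distrib power_sum mult_ac)
  then show ?thesis
    using xv yv z s sum_eq unfolding d_eq solution_set_def scale_solution_def
    by (auto simp: PiE_def Pi_def sum_distrib_left[symmetric])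
qed

lemma card_solution_set_eq_mult:
  fixes lam :: "'a::{field,finite}"
  assumes fin: "finite I" "finite J"
    and e: "int (\<Sum>i\<in>I. p i) - int (\<Sum>j\<in>J. qq j) = int a * e"
    and c: "case c of Inl i \<Rightarrow> i \<in> I | Inr j \<Rightarrow> j \<in> J"
  shows "card (solution_set I J p qq a lam)
    = (CARD('a) - 1) * card {d \<in> solution_set I J p qq a lam. coord c d = 1}"
proof -
  let ?S = "solution_set I J p qq a lam" and ?N = "{d \<in> solution_set I J p qq a lam. coord c d = 1}"
  let ?f = "\<lambda>(t, d). scale_solution I J e t d"
  let ?g = "\<lambda>d. (coord c d, scale_solution I J e (inverse (coord c d)) d)"
  note mem = scale_solution_mem[OF fin _ e]
  note coord = coord_scale_solution[OF c] coord_nonzero[OF c]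
  have "bij_betw ?f ({t. t \<noteq> 0} \<times> ?N) ?S"
  proof (rule bij_betw_byWitness[where f' = ?g])
    show "\<forall>u\<in>{t. t \<noteq> 0} \<times> ?N. ?g (?f u) = u"
      by (auto simp: coord scale_solution_mult scale_solution_one)
    show "\<forall>d\<in>?S. ?f (?g d) = d"
      by (auto simp: coord scale_solution_mult scale_solution_one)
    show "?f ` ({t. t \<noteq> 0} \<times> ?N) \<subseteq> ?S"
      using mem by auto
    show "?g ` ?S \<subseteq> {t. t \<noteq> 0} \<times> ?N"
      by (auto intro!: mem simp: coord)
  qed
  then have "card ?S = card ({t::'a. t \<noteq> 0} \<times> ?N)"
    by (simp add: bij_betw_same_card)
  then show ?thesis by (simp add: card_cartesian_product card_nonzero_field)
qed

section \<open>Character sums\<close>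

locale field_characters =
  fixes \<psi> \<omega> :: "'a::{field,finite} \<Rightarrow> complex"
  assumes additive_char: "nontriv_add_char \<psi>"
    and char_generator: "mult_char_generator \<omega>"
begin

lemma psi_add: "\<psi> (x + y) = \<psi> x * \<psi> y"
  using additive_char by (simp add: nontriv_add_char_def)

lemma psi_zero: "\<psi> 0 = 1"
proof -
  have "\<psi> 0 * \<psi> 0 = \<psi> 0 * 1" using psi_add[of 0 0] by simp
  moreover have "\<psi> 0 \<noteq> 0" using additive_char by (simp add: nontriv_add_char_def)
  ultimately show ?thesis by simp
qed

lemma psi_sum: "\<psi> (\<Sum>i\<in>A. f i) = (\<Prod>i\<in>A. \<psi> (f i))"
  by (induction A rule: infinite_finite_induct) (simp_all add: psi_zero psi_add)

lemma sum_psi: "(\<Sum>t\<in>UNIV. \<psi> t) = 0"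
proof -
  obtain u where u: "\<psi> u \<noteq> 1" using additive_char by (auto simp: nontriv_add_char_def)
  have "(\<Sum>t\<in>UNIV. \<psi> t) = (\<Sum>t\<in>UNIV. \<psi> (t + u))"
    by (rule sum.reindex_bij_witness[of _ "\<lambda>t. t + u" "\<lambda>t. t - u"]) auto
  also have "\<dots> = \<psi> u * (\<Sum>t\<in>UNIV. \<psi> t)"
    by (simp add: psi_add sum_distrib_left mult.commute)
  finally show ?thesis using u by (metis mult_cancel_right2)
qed

lemma sum_psi_mult: "(\<Sum>t\<in>UNIV. \<psi> (t * a)) = (if a = 0 then of_nat CARD('a) else 0)"
proof (cases "a = 0")
  case False
  have "(\<Sum>t\<in>UNIV. \<psi> (t * a)) = (\<Sum>t\<in>UNIV. \<psi> t)"
    by (rule sum.reindex_bij_witness[of _ "\<lambda>u. u / a" "\<lambda>t. t * a"]) (use False in auto)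
  with False sum_psi show ?thesis by simp
qed (simp add: psi_zero)

lemma omega_mult: "x \<noteq> 0 \<Longrightarrow> y \<noteq> 0 \<Longrightarrow> \<omega> (x * y) = \<omega> x * \<omega> y"
  and omega_nonzero: "x \<noteq> 0 \<Longrightarrow> \<omega> x \<noteq> 0"
  using char_generator by (simp_all add: mult_char_generator_def mult_char_def)

lemma omega_one: "\<omega> 1 = 1"
  using omega_mult[of 1 1] omega_nonzero[of 1] by simp

lemma omega_power: "x \<noteq> 0 \<Longrightarrow> \<omega> (x ^ k) = \<omega> x ^ k"
  by (induction k) (simp_all add: omega_one omega_mult)

lemma omega_divide: "x \<noteq> 0 \<Longrightarrow> y \<noteq> 0 \<Longrightarrow> \<omega> (x / y) = \<omega> x / \<omega> y"
  using omega_mult[of "x / y" y] omega_nonzero[of y] by (simp add: eq_divide_eq)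

lemma omega_prod:
  "finite A \<Longrightarrow> (\<And>i. i \<in> A \<Longrightarrow> f i \<noteq> 0) \<Longrightarrow> \<omega> (\<Prod>i\<in>A. f i) = (\<Prod>i\<in>A. \<omega> (f i))"
  by (induction A rule: finite_induct) (simp_all add: omega_one omega_mult)

lemma omega_power_order: "x \<noteq> 0 \<Longrightarrow> \<omega> x ^ (CARD('a) - 1) = 1"
  by (metis field_fermat omega_one omega_power)

lemma omega_eq_one_iff: "x \<noteq> 0 \<Longrightarrow> \<omega> x = 1 \<longleftrightarrow> x = 1"
proof
  assume x: "x \<noteq> 0" and "\<omega> x = 1"
  obtain \<chi> :: "'a \<Rightarrow> complex" where "mult_char \<chi>" and faithful: "\<forall>y. y \<noteq> 0 \<longrightarrow> \<chi> y = 1 \<longrightarrow> y = 1"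
    using exists_faithful_mult_char by blast
  then obtain k where "\<forall>y. y \<noteq> 0 \<longrightarrow> \<chi> y = \<omega> y ^ k"
    using char_generator unfolding mult_char_generator_def by blast
  with x \<open>\<omega> x = 1\<close> faithful show "x = 1" by simp
qed (simp add: omega_one)

lemma omega_powi_mod: "x \<noteq> 0 \<Longrightarrow> \<omega> x powi k = \<omega> x ^ nat (k mod int (CARD('a) - 1))"
  using power_int_eq_power_mod[OF omega_power_order] card_field_ge_2[where 'a='a] by simp

lemma omega_powi_multiple_order: "x \<noteq> 0 \<Longrightarrow> int (CARD('a) - 1) dvd k \<Longrightarrow> \<omega> x powi k = 1"
  by (simp add: omega_powi_mod)

lemma sum_omega_power:
  assumes "x \<noteq> 0"
  shows "(\<Sum>m<CARD('a) - 1. \<omega> x ^ m) = (if x = 1 then of_nat (CARD('a) - 1) else 0)"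
proof (cases "x = 1")
  case False
  then have "\<omega> x \<noteq> 1" using omega_eq_one_iff assms by blast
  then have "(\<Sum>m<CARD('a) - 1. \<omega> x ^ m) = (\<omega> x ^ (CARD('a) - 1) - 1) / (\<omega> x - 1)"
    by (rule geometric_sum)
  with False show ?thesis using omega_power_order[OF assms] by simp
qed (simp add: omega_one)

lemma sum_omega_powi:
  "(\<Sum>x\<in>{x::'a. x \<noteq> 0}. \<omega> x powi k)
     = (if int (CARD('a) - 1) dvd k then of_nat (CARD('a) - 1) else 0)"
proof (cases "int (CARD('a) - 1) dvd k")
  case True
  then have "\<omega> x powi k = 1" if "x \<noteq> 0" for x
    using that by (simp add: omega_powi_mod)
  with True show ?thesis by (simp add: card_nonzero_field)
next
  case False
  let ?g = "mult_generator :: 'a" and ?k = "nat (k mod int (CARD('a) - 1))"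
  let ?S = "\<Sum>x\<in>{x::'a. x \<noteq> 0}. \<omega> x powi k"
  have n: "int (CARD('a) - 1) > 0" using card_field_ge_2[where 'a='a] by simp
  have k: "0 < ?k" "?k < CARD('a) - 1"
    using False pos_mod_sign[OF n, of k] pos_mod_bound[OF n, of k] by (auto simp: dvd_eq_mod_eq_0)
  have "\<omega> ?g powi k \<noteq> 1"
  proof
    assume "\<omega> ?g powi k = 1"
    then have "\<omega> (?g ^ ?k) = 1"
      by (simp add: omega_powi_mod omega_power mult_generator_nonzero)
    then have "?g ^ ?k = ?g ^ 0"
      by (simp add: omega_eq_one_iff mult_generator_nonzero)
    then show False using k by (simp only: mult_generator_power_eq_iff) simp
  qed
  moreover have "?S = \<omega> ?g powi k * ?S"
  proof -
    have "?S = (\<Sum>x\<in>{x::'a. x \<noteq> 0}. \<omega> (?g * x) powi k)"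
      by (rule sum.reindex_bij_witness[of _ "\<lambda>x. ?g * x" "\<lambda>y. y / ?g"])
         (use mult_generator_nonzero in auto)
    also have "\<dots> = \<omega> ?g powi k * ?S"
      by (simp add: sum_distrib_left omega_mult mult_generator_nonzero power_int_mult_distrib)
    finally show ?thesis .
  qed
  ultimately show ?thesis using False by (metis mult_cancel_right1)
qed

lemma gauss_multiple_order:
  assumes "int (CARD('a) - 1) dvd k"
  shows "gauss \<omega> \<psi> k = -1"
proof -
  have "gauss \<omega> \<psi> k = (\<Sum>x\<in>{x::'a. x \<noteq> 0}. \<psi> x)"
    unfolding gauss_def using assms by (intro sum.cong) (simp_all add: omega_powi_mod)
  also have "\<dots> = (\<Sum>t\<in>UNIV. \<psi> t) - \<psi> 0"
  proof -
    have "{x::'a. x \<noteq> 0} = UNIV - {0}" by auto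
    then show ?thesis by (simp add: sum_diff1)
  qed
  finally show ?thesis by (simp add: sum_psi psi_zero)
qed

definition twisted_gauss :: "'a \<Rightarrow> int \<Rightarrow> complex" where
  "twisted_gauss t k = (\<Sum>u\<in>{u. u \<noteq> 0}. \<psi> (t * u) * \<omega> u powi k)"

lemma twisted_gauss_zero:
  "twisted_gauss 0 k = (if int (CARD('a) - 1) dvd k then of_nat (CARD('a) - 1) else 0)"
  unfolding twisted_gauss_def by (simp add: psi_zero sum_omega_powi)

lemma twisted_gauss_zero_mult:
  "twisted_gauss 0 (int k * int m)
     = (if CARD('a) - 1 dvd k * m then of_nat (CARD('a) - 1) else 0)"
  "twisted_gauss 0 (- (int k * int m))
     = (if CARD('a) - 1 dvd k * m then of_nat (CARD('a) - 1) else 0)"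
  by (simp_all only: twisted_gauss_zero dvd_minus_iff int_dvd_int_iff flip: of_nat_mult)

lemma twisted_gauss_nonzero:
  assumes t: "t \<noteq> 0"
  shows "twisted_gauss t k = \<omega> t powi (- k) * gauss \<omega> \<psi> k"
proof -
  have "twisted_gauss t k = (\<Sum>v\<in>{v. v \<noteq> 0}. \<psi> v * \<omega> (v / t) powi k)"
    unfolding twisted_gauss_def
    by (rule sum.reindex_bij_witness[of _ "\<lambda>v. v / t" "\<lambda>u. t * u"]) (use t in auto)
  also have "\<dots> = (\<Sum>v\<in>{v. v \<noteq> 0}. \<omega> t powi (- k) * (\<omega> v powi k * \<psi> v))"
    using t by (intro sum.cong)
      (simp_all add: omega_divide omega_nonzero power_int_divide_distrib power_int_minus
        field_simps)
  also have "\<dots> = \<omega> t powi (- k) * gauss \<omega> \<psi> k"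
    unfolding gauss_def by (simp add: sum_distrib_left)
  finally show ?thesis .
qed

lemma omega_monomial_power:
  fixes x y :: "nat \<Rightarrow> 'a"
  assumes "finite I" "finite J" "lam \<noteq> 0" "z \<noteq> 0" "\<forall>i\<in>I. x i \<noteq> 0" "\<forall>j\<in>J. y j \<noteq> 0"
  shows "\<omega> (lam * z ^ a * (\<Prod>i\<in>I. x i ^ p i) / (\<Prod>j\<in>J. y j ^ qq j)) ^ m
    = \<omega> lam ^ m * \<omega> z powi (int a * int m) * (\<Prod>i\<in>I. \<omega> (x i) powi (int (p i) * int m))
      * (\<Prod>j\<in>J. \<omega> (y j) powi (- (int (qq j) * int m)))"
proof -
  have "\<omega> (lam * z ^ a * (\<Prod>i\<in>I. x i ^ p i) / (\<Prod>j\<in>J. y j ^ qq j))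
      = \<omega> lam * \<omega> z ^ a * (\<Prod>i\<in>I. \<omega> (x i) ^ p i) / (\<Prod>j\<in>J. \<omega> (y j) ^ qq j)"
    using assms by (simp add: omega_mult omega_divide omega_prod omega_power)
  then show ?thesis
    by (simp add: power_int_of_nat_mult power_int_minus power_mult_distrib power_divide
        power_inverse prod_power_distrib prod_inversef[unfolded comp_def] divide_inverse)
qed

definition char_term :: "nat set \<Rightarrow> nat set \<Rightarrow> (nat \<Rightarrow> nat) \<Rightarrow> (nat \<Rightarrow> nat) \<Rightarrow> nat \<Rightarrow> 'a
    \<Rightarrow> 'a \<Rightarrow> nat \<Rightarrow> (nat \<Rightarrow> 'a) \<times> (nat \<Rightarrow> 'a) \<times> 'a \<Rightarrow> complex" where
  "char_term I J p qq a lam t m = (\<lambda>(x, y, z). \<omega> lam ^ m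
     * (\<Prod>i\<in>I. \<psi> (t * x i) * \<omega> (x i) powi (int (p i) * int m))
     * (\<Prod>j\<in>J. \<psi> (- t * y j) * \<omega> (y j) powi (- (int (qq j) * int m)))
     * \<omega> z powi (int a * int m))"

lemma indicator_eq_char_sum:
  fixes x y :: "nat \<Rightarrow> 'a"
  assumes fin: "finite I" "finite J" and lam: "lam \<noteq> 0" and z: "z \<noteq> 0"
    and x: "\<forall>i\<in>I. x i \<noteq> 0" and y: "\<forall>j\<in>J. y j \<noteq> 0"
  shows "(if (\<Sum>i\<in>I. x i) = (\<Sum>j\<in>J. y j) \<and> lam * z ^ a * (\<Prod>i\<in>I. x i ^ p i) = (\<Prod>j\<in>J. y j ^ qq j)
          then 1 else 0)
    = (\<Sum>t\<in>UNIV. \<Sum>m<CARD('a) - 1. char_term I J p qq a lam t m (x, y, z))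
      / (of_nat CARD('a) * of_nat (CARD('a) - 1))"
proof -
  define A where "A = (\<Sum>i\<in>I. x i) - (\<Sum>j\<in>J. y j)"
  define w where "w = lam * z ^ a * (\<Prod>i\<in>I. x i ^ p i) / (\<Prod>j\<in>J. y j ^ qq j)"
  have w: "w \<noteq> 0" using assms by (simp add: w_def)
  have psi_A: "\<psi> (t * A) = (\<Prod>i\<in>I. \<psi> (t * x i)) * (\<Prod>j\<in>J. \<psi> (- t * y j))" for t
  proof -
    have "t * A = (\<Sum>i\<in>I. t * x i) + (\<Sum>j\<in>J. - t * y j)"
      by (simp add: A_def right_diff_distrib sum_distrib_left sum_negf)
    then show ?thesis by (simp add: psi_add psi_sum)
  qed
  have "(if (\<Sum>i\<in>I. x i) = (\<Sum>j\<in>J. y j) \<and> lam * z ^ a * (\<Prod>i\<in>I. x i ^ p i) = (\<Prod>j\<in>J. y j ^ qq j)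
          then 1 else 0) = (if A = 0 then 1 else 0) * (if w = 1 then 1 else (0::complex))"
    using fin y by (simp add: A_def w_def)
  also have "\<dots> = (\<Sum>t\<in>UNIV. \<psi> (t * A)) * (\<Sum>m<CARD('a) - 1. \<omega> w ^ m)
      / (of_nat CARD('a) * of_nat (CARD('a) - 1))"
    using sum_omega_power[OF w] card_field_ge_2[where 'a='a] by (simp add: sum_psi_mult)
  also have "(\<Sum>t\<in>UNIV. \<psi> (t * A)) * (\<Sum>m<CARD('a) - 1. \<omega> w ^ m)
      = (\<Sum>t\<in>UNIV. \<Sum>m<CARD('a) - 1. \<psi> (t * A) * \<omega> w ^ m)"
    by (simp add: sum_product)
  finally show ?thesis
    unfolding psi_A w_def omega_monomial_power[OF assms]
    by (simp add: char_term_def prod.distrib mult_ac)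
qed

definition fourier_term :: "nat set \<Rightarrow> nat set \<Rightarrow> (nat \<Rightarrow> nat) \<Rightarrow> (nat \<Rightarrow> nat) \<Rightarrow> nat \<Rightarrow> 'a
    \<Rightarrow> 'a \<Rightarrow> nat \<Rightarrow> complex" where
  "fourier_term I J p qq a lam t m = \<omega> lam ^ m
     * (\<Prod>i\<in>I. twisted_gauss t (int (p i) * int m))
     * (\<Prod>j\<in>J. twisted_gauss (- t) (- (int (qq j) * int m)))
     * twisted_gauss 0 (int a * int m)"

lemma sum_char_term:
  assumes "finite I" "finite J"
  shows "(\<Sum>d\<in>(I \<rightarrow>\<^sub>E {x. x \<noteq> 0}) \<times> (J \<rightarrow>\<^sub>E {y. y \<noteq> 0}) \<times> {z. z \<noteq> 0}. char_term I J p qq a lam t m d)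
    = fourier_term I J p qq a lam t m"
proof -
  have "(\<Sum>d\<in>(I \<rightarrow>\<^sub>E {x. x \<noteq> 0}) \<times> (J \<rightarrow>\<^sub>E {y. y \<noteq> 0}) \<times> {z. z \<noteq> 0}. char_term I J p qq a lam t m d)
    = \<omega> lam ^ m
      * (\<Sum>x\<in>I \<rightarrow>\<^sub>E {x. x \<noteq> 0}. \<Prod>i\<in>I. \<psi> (t * x i) * \<omega> (x i) powi (int (p i) * int m))
      * (\<Sum>y\<in>J \<rightarrow>\<^sub>E {y. y \<noteq> 0}. \<Prod>j\<in>J. \<psi> (- t * y j) * \<omega> (y j) powi (- (int (qq j) * int m)))
      * (\<Sum>z\<in>{z. z \<noteq> 0}. \<omega> z powi (int a * int m))"
    unfolding char_term_def sum.cartesian_product'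
    by (simp add: sum_distrib_left sum_distrib_right mult_ac)
  also have "\<dots> = fourier_term I J p qq a lam t m"
    unfolding fourier_term_def twisted_gauss_def using assms by (simp add: prod_sum_PiE psi_zero)
  finally show ?thesis .
qed

lemma card_solution_set_char_sum:
  assumes fin: "finite I" "finite J" and lam: "lam \<noteq> 0"
  shows "of_nat (card (solution_set I J p qq a lam))
    = (\<Sum>t\<in>UNIV. \<Sum>m<CARD('a) - 1. fourier_term I J p qq a lam t m)
      / (of_nat CARD('a) * of_nat (CARD('a) - 1))"
proof -
  let ?D = "(I \<rightarrow>\<^sub>E {x::'a. x \<noteq> 0}) \<times> (J \<rightarrow>\<^sub>E {y::'a. y \<noteq> 0}) \<times> {z::'a. z \<noteq> 0}"
  let ?c = "of_nat CARD('a) * of_nat (CARD('a) - 1) :: complex"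
  have "solution_set I J p qq a lam \<subseteq> ?D"
    by (auto simp: solution_set_def)
  then have "of_nat (card (solution_set I J p qq a lam))
      = (\<Sum>d\<in>?D. if d \<in> solution_set I J p qq a lam then 1 else 0 :: complex)"
    using fin by (simp add: sum.If_cases finite_PiE Int_absorb1)
  also have "\<dots> = (\<Sum>d\<in>?D. (\<Sum>t\<in>UNIV. \<Sum>m<CARD('a) - 1. char_term I J p qq a lam t m d) / ?c)"
  proof (intro sum.cong refl)
    fix d assume "d \<in> ?D"
    then obtain x y z where d: "d = (x, y, z)" and z: "z \<noteq> 0"
      and x: "\<forall>i\<in>I. x i \<noteq> 0" and y: "\<forall>j\<in>J. y j \<noteq> 0" and "d \<in> ?D"
      by (auto simp: PiE_def Pi_def)
    then show "(if d \<in> solution_set I J p qq a lam then 1 else 0) =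
         (\<Sum>t\<in>UNIV. \<Sum>m<CARD('a) - 1. char_term I J p qq a lam t m d) / ?c"
      using indicator_eq_char_sum[OF fin lam z x y, of a p qq] by (simp add: solution_set_def)
  qed
  also have "\<dots> = (\<Sum>t\<in>UNIV. \<Sum>m<CARD('a) - 1. \<Sum>d\<in>?D. char_term I J p qq a lam t m d) / ?c"
    by (simp add: sum_divide_distrib[symmetric] sum.swap[of _ ?D])
  finally show ?thesis by (simp add: sum_char_term fin)
qed

lemma fourier_term_zero:
  assumes fin: "finite I" "finite J" and coprime: "Gcd (insert a (p ` I \<union> qq ` J)) = 1"
    and m: "m < CARD('a) - 1"
  shows "fourier_term I J p qq a lam 0 m
    = (if m = 0 then of_nat (CARD('a) - 1) ^ (card I + card J + 1) else 0)"
proof (cases "m = 0")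
  case False
  let ?n = "CARD('a) - 1"
  have "\<not> (?n dvd a * m \<and> (\<forall>i\<in>I. ?n dvd p i * m) \<and> (\<forall>j\<in>J. ?n dvd qq j * m))"
  proof
    assume "?n dvd a * m \<and> (\<forall>i\<in>I. ?n dvd p i * m) \<and> (\<forall>j\<in>J. ?n dvd qq j * m)"
    then have "?n dvd Gcd ((*) m ` insert a (p ` I \<union> qq ` J))"
      by (intro Gcd_greatest) (auto simp: mult.commute)
    also have "Gcd ((*) m ` insert a (p ` I \<union> qq ` J)) = m"
      using Gcd_mult[of m "insert a (p ` I \<union> qq ` J)"] coprime by simp
    finally show False using False m by (simp add: nat_dvd_not_less)
  qed
  with False fin show ?thesis
    by (auto simp: fourier_term_def twisted_gauss_zero_mult)
qed (simp add: fourier_term_def twisted_gauss_zero power_add)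

definition gauss_term :: "nat set \<Rightarrow> nat set \<Rightarrow> (nat \<Rightarrow> nat) \<Rightarrow> (nat \<Rightarrow> nat) \<Rightarrow> nat \<Rightarrow> 'a
    \<Rightarrow> nat \<Rightarrow> complex" where
  "gauss_term I J p qq a lam m = (if CARD('a) - 1 dvd a * m then 1 else 0)
     * (\<Prod>i\<in>I. gauss \<omega> \<psi> (int (p i) * int m))
     * (\<Prod>j\<in>J. gauss \<omega> \<psi> (- (int (qq j) * int m)))
     * \<omega> ((-1) ^ (\<Sum>j\<in>J. qq j) * lam) ^ m"

lemma fourier_term_nonzero:
  assumes t: "t \<noteq> 0" and lam: "lam \<noteq> 0"
    and a_dvd: "int a dvd int (\<Sum>i\<in>I. p i) - int (\<Sum>j\<in>J. qq j)"
  shows "fourier_term I J p qq a lam t m = of_nat (CARD('a) - 1) * gauss_term I J p qq a lam m"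
proof (cases "CARD('a) - 1 dvd a * m")
  case True
  let ?P = "int (\<Sum>i\<in>I. p i)" and ?Q = "int (\<Sum>j\<in>J. qq j)"
  have "int (CARD('a) - 1) dvd (?Q - ?P) * int m"
  proof -
    obtain k where "?P - ?Q = int a * k" using a_dvd by (elim dvdE)
    then have "(?Q - ?P) * int m = int (a * m) * (- k)" by (simp add: algebra_simps)
    then show ?thesis using True by (metis dvd_mult2 int_dvd_int_iff)
  qed
  then have "\<omega> t powi ((?Q - ?P) * int m) = 1"
    by (rule omega_powi_multiple_order[OF t])
  then have cancel: "\<omega> t powi (- (?P * int m)) * \<omega> t powi (?Q * int m) = 1"
    using omega_nonzero[OF t] by (subst power_int_add[symmetric]) (simp_all add: algebra_simps)
  have "(\<Prod>i\<in>I. twisted_gauss t (int (p i) * int m))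
      = \<omega> t powi (- (?P * int m)) * (\<Prod>i\<in>I. gauss \<omega> \<psi> (int (p i) * int m))"
    using omega_nonzero[OF t]
    by (simp add: twisted_gauss_nonzero[OF t] prod.distrib prod_power_int sum_negf
        sum_distrib_right)
  moreover have "(\<Prod>j\<in>J. twisted_gauss (- t) (- (int (qq j) * int m)))
      = \<omega> (-1) powi (?Q * int m) * \<omega> t powi (?Q * int m)
        * (\<Prod>j\<in>J. gauss \<omega> \<psi> (- (int (qq j) * int m)))"
  proof -
    have "\<omega> (- t) = \<omega> (-1) * \<omega> t" using omega_mult[of "-1" t] t by simp
    then show ?thesis
      using omega_nonzero[of "- t"] t
      by (simp add: twisted_gauss_nonzero prod.distrib prod_power_int sum_distrib_right
          power_int_mult_distrib)
  qed
  moreover have "\<omega> ((-1) ^ (\<Sum>j\<in>J. qq j) * lam) ^ m = \<omega> (-1) powi (?Q * int m) * \<omega> lam ^ m"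
    using lam
    by (simp add: omega_mult omega_power power_mult_distrib power_int_of_nat_mult del: of_nat_sum)
  ultimately show ?thesis
    using True cancel
    by (simp add: fourier_term_def gauss_term_def twisted_gauss_zero_mult mult_ac)
qed (simp add: fourier_term_def gauss_term_def twisted_gauss_zero_mult)

lemma card_solution_set:
  assumes fin: "finite I" "finite J" and lam: "lam \<noteq> 0"
    and a_dvd: "int a dvd int (\<Sum>i\<in>I. p i) - int (\<Sum>j\<in>J. qq j)"
    and coprime: "Gcd (insert a (p ` I \<union> qq ` J)) = 1"
  shows "of_nat (card (solution_set I J p qq a lam))
    = of_nat (CARD('a) - 1) ^ (card I + card J) / of_nat CARD('a)
      + of_nat (CARD('a) - 1) / of_nat CARD('a) * (\<Sum>m<CARD('a) - 1. gauss_term I J p qq a lam m)"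
proof -
  let ?n = "CARD('a) - 1"
  have "(\<Sum>t\<in>UNIV. fourier_term I J p qq a lam t m)
      = fourier_term I J p qq a lam 0 m + of_nat ?n * (of_nat ?n * gauss_term I J p qq a lam m)"
    for m
  proof -
    have "(\<Sum>t\<in>UNIV. fourier_term I J p qq a lam t m)
        = fourier_term I J p qq a lam 0 m + (\<Sum>t\<in>UNIV - {0}. fourier_term I J p qq a lam t m)"
      by (rule sum.remove) auto
    also have "UNIV - {0} = {t::'a. t \<noteq> 0}" by auto
    finally have "(\<Sum>t\<in>UNIV. fourier_term I J p qq a lam t m)
        = fourier_term I J p qq a lam 0 m + (\<Sum>t\<in>{t. t \<noteq> 0}. fourier_term I J p qq a lam t m)" .
    then show ?thesis
      using lam a_dvd by (simp add: fourier_term_nonzero card_nonzero_field)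
  qed
  then have "(\<Sum>t\<in>UNIV. \<Sum>m<?n. fourier_term I J p qq a lam t m)
      = (\<Sum>m<?n. fourier_term I J p qq a lam 0 m)
        + of_nat ?n * (of_nat ?n * (\<Sum>m<?n. gauss_term I J p qq a lam m))"
    by (subst sum.swap) (simp add: sum.distrib sum_distrib_left)
  also have "(\<Sum>m<?n. fourier_term I J p qq a lam 0 m) = of_nat ?n ^ (card I + card J + 1)"
    using card_field_ge_2[where 'a='a] by (simp add: fourier_term_zero[OF fin coprime])
  finally have "(\<Sum>t\<in>UNIV. \<Sum>m<?n. fourier_term I J p qq a lam t m)
      = of_nat ?n * (of_nat ?n ^ (card I + card J)
        + of_nat ?n * (\<Sum>m<?n. gauss_term I J p qq a lam m))"
    by (simp add: algebra_simps)
  moreover have "(of_nat ?n :: complex) \<noteq> 0" using card_field_ge_2[where 'a='a] by simp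
  ultimately show ?thesis
    by (simp add: card_solution_set_char_sum[OF fin lam] add_divide_distrib)
qed

lemma card_normalized_solution_set:
  assumes fin: "finite I" "finite J" and lam: "lam \<noteq> 0"
    and e: "int (\<Sum>i\<in>I. p i) - int (\<Sum>j\<in>J. qq j) = int a * e"
    and coprime: "Gcd (insert a (p ` I \<union> qq ` J)) = 1"
    and c: "case c of Inl i \<Rightarrow> i \<in> I | Inr j \<Rightarrow> j \<in> J"
  shows "of_nat (card {d \<in> solution_set I J p qq a lam. coord c d = 1})
    = of_nat (CARD('a) - 1) powi (int (card I + card J) - 1) / of_nat CARD('a)
      + (\<Sum>m<CARD('a) - 1. gauss_term I J p qq a lam m) / of_nat CARD('a)"
proof -
  let ?n = "of_nat (CARD('a) - 1) :: complex"
  have n: "?n \<noteq> 0" using card_field_ge_2[where 'a='a] by simp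
  let ?A = "?n powi (int (card I + card J) - 1)"
    and ?S = "\<Sum>m<CARD('a) - 1. gauss_term I J p qq a lam m"
  have "?n ^ (card I + card J) = ?n * ?A"
    using n by (simp add: power_int_diff flip: power_int_of_nat)
  then have "?n * of_nat (card {d \<in> solution_set I J p qq a lam. coord c d = 1})
      = ?n * (?A / of_nat CARD('a) + ?S / of_nat CARD('a))"
    using card_solution_set_eq_mult[OF fin e c, of lam]
      card_solution_set[OF fin lam _ coprime] e by (simp add: ring_distribs)
  then show ?thesis using n by simp
qed

end

section \<open>Cells\<close>

lemma Gcd_insert_Gcd: "Gcd (insert (Gcd A) B) = Gcd (A \<union> B :: nat set)"
proof (rule dvd_antisym)
  show "Gcd (insert (Gcd A) B) dvd Gcd (A \<union> B)"
  proof (rule Gcd_greatest)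
    fix x assume "x \<in> A \<union> B"
    then show "Gcd (insert (Gcd A) B) dvd x"
    proof
      assume "x \<in> A"
      have "Gcd (insert (Gcd A) B) dvd Gcd A" by (rule Gcd_dvd) simp
      also have "Gcd A dvd x" using \<open>x \<in> A\<close> by (rule Gcd_dvd)
      finally show ?thesis .
    qed (rule Gcd_dvd, simp)
  qed
  show "Gcd (A \<union> B) dvd Gcd (insert (Gcd A) B)"
    by (auto intro!: Gcd_greatest Gcd_dvd)
qed

lemma cell_S_subset:
  assumes "is_cell r s C"
  shows "Sx C \<subseteq> {1..r}" and "Sy C \<subseteq> {1..s}"
  using assms unfolding is_cell_def Sx_def Sy_def by auto

lemma Gcd_insert_a_S_complement:
  assumes "is_cell r s C"
  shows "Gcd (insert (a_S p qq C) (p ` ({1..r} - Sx C) \<union> qq ` ({1..s} - Sy C)))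
    = Gcd (p ` {1..r} \<union> qq ` {1..s})"
proof -
  have "(p ` Sx C \<union> qq ` Sy C) \<union> (p ` ({1..r} - Sx C) \<union> qq ` ({1..s} - Sy C))
      = p ` {1..r} \<union> qq ` {1..s}"
    using cell_S_subset[OF assms] by auto
  then show ?thesis by (simp only: a_S_def Gcd_insert_Gcd)
qed

lemma int_dvd_sum_diff_complement:
  assumes fin: "finite I" "finite J" and sub: "A \<subseteq> I" "B \<subseteq> J"
    and sums: "(\<Sum>i\<in>I. p i) = (\<Sum>j\<in>J. qq j)"
    and a_dvd: "\<forall>i\<in>A. a dvd p i" "\<forall>j\<in>B. a dvd qq j"
  shows "int a dvd int (\<Sum>i\<in>I - A. p i) - int (\<Sum>j\<in>J - B. qq j)"
proof -
  have "(\<Sum>i\<in>I. p i) = (\<Sum>i\<in>I - A. p i) + (\<Sum>i\<in>A. p i)"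
    and "(\<Sum>j\<in>J. qq j) = (\<Sum>j\<in>J - B. qq j) + (\<Sum>j\<in>B. qq j)"
    using fin sub by (intro sum.subset_diff; auto)+
  then have "int (\<Sum>i\<in>I - A. p i) - int (\<Sum>j\<in>J - B. qq j)
      = int (\<Sum>j\<in>B. qq j) - int (\<Sum>i\<in>A. p i)"
    using sums by linarith
  moreover have "int a dvd int (\<Sum>j\<in>B. qq j) - int (\<Sum>i\<in>A. p i)"
    using a_dvd by (intro dvd_diff) (simp_all only: int_dvd_int_iff dvd_sum)
  ultimately show ?thesis by simp
qed

context field_characters
begin

lemma prod_gauss_multiple_order:
  assumes "finite I" "A \<subseteq> I" "\<forall>i\<in>A. int (CARD('a) - 1) dvd k i"
  shows "(\<Prod>i\<in>I. gauss \<omega> \<psi> (k i)) = (-1) ^ card A * (\<Prod>i\<in>I - A. gauss \<omega> \<psi> (k i))"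
proof -
  have "(\<Prod>i\<in>I. gauss \<omega> \<psi> (k i)) = (\<Prod>i\<in>I - A. gauss \<omega> \<psi> (k i)) * (\<Prod>i\<in>A. gauss \<omega> \<psi> (k i))"
    using assms by (intro prod.subset_diff) auto
  also have "(\<Prod>i\<in>A. gauss \<omega> \<psi> (k i)) = (\<Prod>i\<in>A. -1)"
    using assms by (intro prod.cong) (simp_all add: gauss_multiple_order)
  finally show ?thesis by simp
qed

lemma gauss_summand_restrict:
  assumes fin: "finite I" "finite J" and sub: "A \<subseteq> I" "B \<subseteq> J"
    and a_dvd: "\<forall>i\<in>A. a dvd p i" "\<forall>j\<in>B. a dvd qq j" and lam: "lam \<noteq> 0"
  shows "(if CARD('a) - 1 dvd a * m then 1 else 0)
      * (\<Prod>i\<in>I. gauss \<omega> \<psi> (int (p i) * int m))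
      * (\<Prod>j\<in>J. gauss \<omega> \<psi> (- (int (qq j) * int m)))
      * \<omega> ((-1) ^ (\<Sum>j\<in>J. qq j) * lam) ^ m
    = (-1) ^ (card A + card B) * gauss_term (I - A) (J - B) p qq a lam m"
proof (cases "CARD('a) - 1 dvd a * m")
  case True
  have multiple: "CARD('a) - 1 dvd b * m" if "a dvd b" for b
    using dvd_trans[OF True mult_dvd_mono[OF that dvd_refl]] .
  have "(\<Sum>j\<in>J. qq j) = (\<Sum>j\<in>J - B. qq j) + (\<Sum>j\<in>B. qq j)"
    using fin sub by (intro sum.subset_diff) auto
  moreover have "\<omega> ((-1) ^ (\<Sum>j\<in>B. qq j)) ^ m = 1"
  proof -
    have "a dvd (\<Sum>j\<in>B. qq j)" using a_dvd by (simp add: dvd_sum)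
    then have "int (CARD('a) - 1) dvd int (\<Sum>j\<in>B. qq j) * int m"
      using multiple by (simp only: int_dvd_int_iff flip: of_nat_mult)
    moreover have "\<omega> ((-1) ^ (\<Sum>j\<in>B. qq j)) ^ m = \<omega> (-1) powi (int (\<Sum>j\<in>B. qq j) * int m)"
      by (simp add: omega_power power_int_of_nat_mult del: of_nat_sum)
    ultimately show ?thesis
      using omega_powi_multiple_order[of "-1" "int (\<Sum>j\<in>B. qq j) * int m"] by simp
  qed
  ultimately have "\<omega> ((-1) ^ (\<Sum>j\<in>J. qq j) * lam) ^ m = \<omega> ((-1) ^ (\<Sum>j\<in>J - B. qq j) * lam) ^ m"
    using lam by (simp add: omega_mult power_add power_mult_distrib)
  moreover have "\<forall>i\<in>A. int (CARD('a) - 1) dvd int (p i) * int m"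
    and "\<forall>j\<in>B. int (CARD('a) - 1) dvd - (int (qq j) * int m)"
    using multiple a_dvd unfolding dvd_minus_iff of_nat_mult[symmetric] int_dvd_int_iff by blast+
  ultimately show ?thesis
    using True fin sub
    by (simp add: gauss_term_def prod_gauss_multiple_order[of I A] prod_gauss_multiple_order[of J B]
        power_add mult_ac)
qed (simp add: gauss_term_def)

lemma N'_cell_eq:
  assumes sums: "(\<Sum>i=1..r. p i) = (\<Sum>j=1..s. qq j)"
    and coprime: "Gcd (p ` {1..r} \<union> qq ` {1..s}) = 1"
    and lam: "lam \<noteq> 0" and cell: "is_cell r s C" and choice: "valid_choice r s C c"
  shows "of_nat (N'_cell r s p qq C lam c)
    = of_nat (CARD('a) - 1) powi (int r + int s - int (card_S C) - 1) / of_nat CARD('a)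
      + (\<Sum>m<CARD('a) - 1. gauss_term ({1..r} - Sx C) ({1..s} - Sy C) p qq (a_S p qq C) lam m)
        / of_nat CARD('a)"
proof -
  define I where "I = {1..r} - Sx C"
  define J where "J = {1..s} - Sy C"
  note sub = cell_S_subset[OF cell]
  have fin: "finite I" "finite J" by (simp_all add: I_def J_def)
  have a_dvd: "\<forall>i\<in>Sx C. a_S p qq C dvd p i" "\<forall>j\<in>Sy C. a_S p qq C dvd qq j"
    by (simp_all add: a_S_def Gcd_dvd)
  obtain e where e: "int (\<Sum>i\<in>I. p i) - int (\<Sum>j\<in>J. qq j) = int (a_S p qq C) * e"
    using int_dvd_sum_diff_complement[OF _ _ sub sums a_dvd] unfolding I_def J_def
    by (auto elim: dvdE)
  have c: "case c of Inl i \<Rightarrow> i \<in> I | Inr j \<Rightarrow> j \<in> J"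
    using choice by (cases c) (simp_all add: valid_choice_def I_def J_def)
  have "card (Sx C) \<le> r" "card (Sy C) \<le> s"
    using card_mono[OF _ sub(1)] card_mono[OF _ sub(2)] by simp_all
  then have "int (card I + card J) - 1 = int r + int s - int (card_S C) - 1"
    using sub by (simp add: I_def J_def card_S_def card_Diff_subset finite_subset)
  with card_normalized_solution_set[OF fin lam e _ c] show ?thesis
    using Gcd_insert_a_S_complement[OF cell] coprime
    unfolding N'_cell_eq_card I_def J_def by (simp add: add_diff_eq)
qed

lemma sum_gauss_summand_cell:
  assumes cell: "is_cell r s C" and lam: "lam \<noteq> 0"
  shows "(\<Sum>m = 0..CARD('a) - 2.
            (if (a_S p qq C * m) mod (CARD('a) - 1) = 0 then 1 else 0)
            * (\<Prod>i=1..r. gauss \<omega> \<psi> (int (p i) * int m))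
            * (\<Prod>j=1..s. gauss \<omega> \<psi> (- (int (qq j) * int m)))
            * (\<omega> ((-1) ^ (\<Sum>j=1..s. qq j) * lam)) ^ m)
    = (-1) ^ card_S C
      * (\<Sum>m<CARD('a) - 1. gauss_term ({1..r} - Sx C) ({1..s} - Sy C) p qq (a_S p qq C) lam m)"
proof -
  have "\<forall>i\<in>Sx C. a_S p qq C dvd p i" "\<forall>j\<in>Sy C. a_S p qq C dvd qq j"
    by (simp_all add: a_S_def Gcd_dvd)
  moreover have "{0..CARD('a) - 2} = {..<CARD('a) - 1}"
    using card_field_ge_2[where 'a='a] by auto
  ultimately show ?thesis
    using gauss_summand_restrict[OF _ _ cell_S_subset[OF cell] _ _ lam]
    by (simp add: sum_distrib_left dvd_eq_mod_eq_0 card_S_def)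
qed

end

theorem mainTheorem13:
  fixes r s :: nat and p qq :: "nat \<Rightarrow> nat"
    and \<psi> \<omega> :: "'a::{field,finite} \<Rightarrow> complex"
    and lam :: 'a and C :: "(nat \<times> nat) list" and c :: "nat + nat"
  assumes p_pos: "\<forall>i\<in>{1..r}. p i > 0"
    and q_pos: "\<forall>j\<in>{1..s}. qq j > 0"
    and sums: "(\<Sum>i=1..r. p i) = (\<Sum>j=1..s. qq j)"
    and coprime: "Gcd (p ` {1..r} \<union> qq ` {1..s}) = 1"
    and psi: "nontriv_add_char \<psi>"
    and omega: "mult_char_generator \<omega>"
    and lam: "lam \<noteq> 0"
    and cell: "is_cell r s C" and nonempty: "C \<noteq> []"
    and S_bound: "card_S C \<le> r + s - 1"
    and choice: "valid_choice r s C c"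
  shows "N_cell r s p qq C lam c =
     (of_nat (CARD('a)) - 1) powi (int r + int s - int (length C) - 2) / of_nat (CARD('a))
     + (-1) ^ card_S C * (of_nat (CARD('a)) - 1) powi (int (card_S C) - int (length C) - 1)
         / of_nat (CARD('a))
       * (\<Sum>m = 0..CARD('a) - 2.
            (if (a_S p qq C * m) mod (CARD('a) - 1) = 0 then 1 else 0)
            * (\<Prod>i=1..r. gauss \<omega> \<psi> (int (p i) * int m))
            * (\<Prod>j=1..s. gauss \<omega> \<psi> (- (int (qq j) * int m)))
            * (\<omega> ((-1) ^ (\<Sum>j=1..s. qq j) * lam)) ^ m)"
proof -
  interpret field_characters \<psi> \<omega> by (rule field_characters.intro[OF psi omega])
  let ?n = "of_nat (CARD('a) - 1) :: complex" and ?q = "of_nat CARD('a) :: complex"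
  let ?G = "\<Sum>m<CARD('a) - 1. gauss_term ({1..r} - Sx C) ({1..s} - Sy C) p qq (a_S p qq C) lam m"
  let ?P = "?n powi (int (card_S C) - int (length C) - 1)"
  have n_eq: "(of_nat CARD('a) - 1 :: complex) = ?n"
    using card_field_ge_2[where 'a='a] by (simp add: of_nat_diff)
  have "?n \<noteq> 0" using card_field_ge_2[where 'a='a] by simp
  then have powers: "?P * ?n powi (int r + int s - int (card_S C) - 1)
      = ?n powi (int r + int s - int (length C) - 2)"
    by (simp add: power_int_add[symmetric] algebra_simps)
  have sign: "(-1 :: complex) ^ card_S C * (-1) ^ card_S C = 1"
    by (simp flip: power_add)
  have "N_cell r s p qq C lam c
      = ?P * (?n powi (int r + int s - int (card_S C) - 1) / ?q + ?G / ?q)"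
    unfolding N_cell_def N'_cell_eq[OF sums coprime lam cell choice] n_eq ..
  also have "\<dots> = ?P * ?n powi (int r + int s - int (card_S C) - 1) / ?q
      + ((-1) ^ card_S C * (-1) ^ card_S C) * ?P / ?q * ?G"
    unfolding sign by (simp add: distrib_left)
  also have "\<dots> = ?n powi (int r + int s - int (length C) - 2) / ?q
      + (-1) ^ card_S C * ?P / ?q * ((-1) ^ card_S C * ?G)"
    unfolding powers by (simp add: mult_ac)
  finally show ?thesis unfolding sum_gauss_summand_cell[OF cell lam] n_eq .
qed

end
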